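(* For every $\eta>0$ there exist $\rho=\rho(\eta)>0$ and $n_0$ such that the following holds for all $n\ge n_0$. Let $P,Q\subseteq[n]$ be disjoint subsets, put $p=|P|/n$, $q=|Q|/n$, and suppose $p\ge q$ and $\eta\le p\le1-\eta$. Let $0\le b\le a\le(1-\eta)n$ be integers, and let $A,B\subseteq[n]$ be disjoint sets with $|A|=a$, $|B|=b$, chosen uniformly at random among all such pairs of subsets of $[n]$. Let $Z:=|A\cap P|-|A\cap Q|-|B\cap P|+|B\cap Q|$. Then $\mathbb{P}[Z\ge\rho\sqrt{a}]\ge\rho$. *)

theory Defs
  imports Complex_Main
begin

text \<open>The sample space: ordered pairs of disjoint subsets (A,B) of [n] = {1..n}
  with |A| = a and |B| = b. The uniform probability of an event E is
  card (E \<inter> space) / card space.\<close>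
definition disj_pairs :: "nat \<Rightarrow> nat \<Rightarrow> nat \<Rightarrow> (nat set \<times> nat set) set" where
  "disj_pairs n a b = {(A, B). A \<subseteq> {1..n} \<and> B \<subseteq> {1..n} \<and> A \<inter> B = {}
                                \<and> card A = a \<and> card B = b}"

definition Zstat :: "nat set \<Rightarrow> nat set \<Rightarrow> nat set \<Rightarrow> nat set \<Rightarrow> int" where
  "Zstat P Q A B = int (card (A \<inter> P)) - int (card (A \<inter> Q))
                   - int (card (B \<inter> P)) + int (card (B \<inter> Q))"

end

theory Submission
  imports Defs "HOL-Combinatorics.Permutations"
begin

(* A pair (A, B) is sampled as a triple (A1, A2, B) with A = A1 \<union> A2 and |A1| = |B| = b; every
   pair has (a choose b) such encodings. Match a set X \<subseteq> P of size min(|P|, n - |P|) \<ge> eta n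
   injectively into [n] - P, covering Q, and for T \<subseteq> X let swap_pairs T exchange x and beta x
   for x \<in> T. This permutation preserves the uniform distribution on triples, and 2Z of the
   permuted triple is a term C independent of T plus a Rademacher sum over X whose variance is
   at least the number of pairs {x, beta x} separated by the triple. By the symmetry of the
   distribution under permutations of [n], the expected number of separated pairs is at least
   eta^3 a / 2, so an eta^3/16 fraction of the triples have at least eta^3 a / 4 of them;
   exchanging A1 with B preserves this and makes C nonnegative for at least half of those. For
   such a triple the fourth-moment bound makes the Rademacher sum at least 2 rho sqrt a for 1/12
   of the choices of T, with rho = eta^3 / 384. *)

definition signed_sum :: "('a \<Rightarrow> real) \<Rightarrow> 'a set \<Rightarrow> 'a set \<Rightarrow> real" where
  "signed_sum d X T = (\<Sum>x\<in>X. if x \<in> T then - d x else d x)"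

lemma sum_Pow_insert:
  fixes g :: "'a set \<Rightarrow> 'b::comm_monoid_add"
  assumes "finite X" "x \<notin> X"
  shows "(\<Sum>T\<in>Pow (insert x X). g T) = (\<Sum>T\<in>Pow X. g T + g (insert x T))"
proof -
  have "inj_on (insert x) (Pow X)"
    using assms(2) by (intro inj_onI) (metis Diff_insert_absorb PowD subsetD)
  moreover have "Pow X \<inter> insert x ` Pow X = {}"
    using assms(2) by auto
  ultimately show ?thesis
    using assms(1) by (simp add: Pow_insert sum.union_disjoint sum.reindex sum.distrib)
qed

lemma signed_sum_insert:
  assumes "finite X" "x \<notin> X" "T \<subseteq> X"
  shows "signed_sum d (insert x X) T = d x + signed_sum d X T"
    and "signed_sum d (insert x X) (insert x T) = - d x + signed_sum d X T"
proof -
  have "(\<Sum>y\<in>X. if y \<in> insert x T then - d y else d y) = signed_sum d X T"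
    unfolding signed_sum_def using assms(2) by (intro sum.cong) auto
  then show "signed_sum d (insert x X) (insert x T) = - d x + signed_sum d X T"
    using assms by (simp add: signed_sum_def)
  show "signed_sum d (insert x X) T = d x + signed_sum d X T"
    using assms by (auto simp: signed_sum_def)
qed

lemma signed_sum_second_moment:
  assumes "finite X"
  shows "(\<Sum>T\<in>Pow X. (signed_sum d X T)^2) = 2 ^ card X * (\<Sum>x\<in>X. (d x)^2)"
  using assms
proof (induction X rule: finite_induct)
  case empty
  then show ?case by (simp add: signed_sum_def)
next
  case (insert x X)
  have "(signed_sum d (insert x X) T)^2 + (signed_sum d (insert x X) (insert x T))^2
        = 2 * (signed_sum d X T)^2 + 2 * (d x)^2" if "T \<in> Pow X" for T
    using that insert.hyps by (simp add: signed_sum_insert power2_eq_square algebra_simps)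
  then have "(\<Sum>T\<in>Pow (insert x X). (signed_sum d (insert x X) T)^2)
      = 2 * (\<Sum>T\<in>Pow X. (signed_sum d X T)^2) + 2 * (d x)^2 * 2 ^ card X"
    using insert.hyps by (simp add: sum_Pow_insert sum.distrib sum_distrib_left card_Pow)
  then show ?case
    using insert by (simp add: algebra_simps)
qed

lemma signed_sum_fourth_moment:
  assumes "finite X"
  shows "(\<Sum>T\<in>Pow X. (signed_sum d X T)^4)
           = 2 ^ card X * (3 * (\<Sum>x\<in>X. (d x)^2)^2 - 2 * (\<Sum>x\<in>X. (d x)^4))"
  using assms
proof (induction X rule: finite_induct)
  case empty
  then show ?case by (simp add: signed_sum_def)
next
  case (insert x X)
  have "(signed_sum d (insert x X) T)^4 + (signed_sum d (insert x X) (insert x T))^4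
        = 2 * (signed_sum d X T)^4 + 12 * (d x)^2 * (signed_sum d X T)^2 + 2 * (d x)^4"
    if "T \<in> Pow X" for T
    using that insert.hyps by (simp add: signed_sum_insert) algebra
  then have "(\<Sum>T\<in>Pow (insert x X). (signed_sum d (insert x X) T)^4)
      = 2 * (\<Sum>T\<in>Pow X. (signed_sum d X T)^4)
        + 12 * (d x)^2 * (\<Sum>T\<in>Pow X. (signed_sum d X T)^2) + 2 * (d x)^4 * 2 ^ card X"
    using insert.hyps by (simp add: sum_Pow_insert sum.distrib sum_distrib_left card_Pow)
  then show ?case
    using insert.IH insert.hyps signed_sum_second_moment[OF insert.hyps(1), of d]
    by (simp add: power2_eq_square power4_eq_xxxx algebra_simps)
qed

lemma signed_sum_complement:
  assumes "T \<subseteq> X"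
  shows "signed_sum d X (X - T) = - signed_sum d X T"
  unfolding signed_sum_def using assms by (subst sum_negf[symmetric]) (intro sum.cong, auto)

(* Summed over all sign patterns, with the second and fourth moments inserted, this gives the
   Paley-Zygmund type bound signed_sum_abs_tail. *)
lemma power2_le_threshold_quartic:
  fixes s u V :: real
  assumes "0 < V"
  shows "s^2 \<le> u^2 + s^4 / (12 * V) + (if u \<le> \<bar>s\<bar> then 3 * V else 0)"
proof (cases "u \<le> \<bar>s\<bar>")
  case True
  have "0 \<le> (s^2 - 6 * V)^2 / (12 * V)"
    using assms by simp
  also have "\<dots> = s^4 / (12 * V) + 3 * V - s^2"
    using assms by (simp add: field_simps power2_eq_square) (simp add: algebra_simps power4_eq_xxxx)
  finally show ?thesis
    using True by (smt (verit) zero_le_power2)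
next
  case False
  then have "s^2 < u^2"
    by (metis abs_ge_zero not_le power2_abs power_strict_mono zero_less_numeral)
  moreover have "0 \<le> s^4 / (12 * V)"
    using assms by simp
  ultimately show ?thesis
    using False by simp
qed

lemma signed_sum_abs_tail:
  assumes fin: "finite X" and u: "u > 0" and var: "4 * u^2 \<le> (\<Sum>x\<in>X. (d x)^2)"
  shows "2 ^ card X \<le> 6 * card {T \<in> Pow X. u \<le> \<bar>signed_sum d X T\<bar>}"
proof -
  define V where "V = (\<Sum>x\<in>X. (d x)^2)"
  define M :: real where "M = 2 ^ card X"
  define C where "C = {T \<in> Pow X. u \<le> \<bar>signed_sum d X T\<bar>}"
  let ?S = "signed_sum d X"
  have V: "V > 0"
    using u var unfolding V_def by (smt (verit) zero_less_power)
  have pointwise: "(?S T)^2 \<le> u^2 + (?S T)^4 / (12 * V) + (if T \<in> C then 3 * V else 0)"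
    if "T \<in> Pow X" for T
    using that power2_le_threshold_quartic[OF V, of "?S T" u] unfolding C_def by auto
  have "(\<Sum>T\<in>Pow X. (?S T)^4) \<le> 3 * M * V^2"
    using signed_sum_fourth_moment[OF fin, of d] unfolding M_def V_def
    by (simp add: sum_nonneg)
  then have fourth: "(\<Sum>T\<in>Pow X. (?S T)^4) / (12 * V) \<le> M * V / 4"
    using V by (simp add: field_simps power2_eq_square)
  have small: "M * u^2 \<le> M * V / 4"
    using var unfolding M_def V_def by simp
  have "M * V = (\<Sum>T\<in>Pow X. (?S T)^2)"
    using signed_sum_second_moment[OF fin, of d] unfolding M_def V_def by simp
  also have "\<dots> \<le> (\<Sum>T\<in>Pow X. u^2 + (?S T)^4 / (12 * V) + (if T \<in> C then 3 * V else 0))"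
    by (intro sum_mono pointwise)
  also have "\<dots> = M * u^2 + (\<Sum>T\<in>Pow X. (?S T)^4) / (12 * V) + 3 * V * card C"
    using fin by (simp add: sum.distrib sum_divide_distrib card_Pow M_def sum.If_cases C_def Int_def)
  also have "\<dots> \<le> M * V / 4 + M * V / 4 + 3 * V * card C"
    using fourth small by linarith
  finally have "V * M \<le> V * (6 * card C)"
    by (simp add: algebra_simps)
  then have "real (2 ^ card X) \<le> real (6 * card C)"
    using V unfolding M_def by simp
  then show ?thesis
    unfolding C_def by linarith
qed

lemma signed_sum_tail:
  assumes "finite X" and "u > 0" and "4 * u^2 \<le> (\<Sum>x\<in>X. (d x)^2)"
  shows "2 ^ card X \<le> 12 * card {T \<in> Pow X. u \<le> signed_sum d X T}"
proof -
  let ?upper = "{T \<in> Pow X. u \<le> signed_sum d X T}"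
  let ?lower = "{T \<in> Pow X. signed_sum d X T \<le> - u}"
  have "?lower = (\<lambda>T. X - T) ` ?upper"
  proof (intro equalityI subsetI)
    fix T assume "T \<in> ?lower"
    then have "X - T \<in> ?upper" and "T = X - (X - T)"
      using signed_sum_complement[of T X d] by auto
    then show "T \<in> (\<lambda>T. X - T) ` ?upper"
      by blast
  next
    fix T assume "T \<in> (\<lambda>T. X - T) ` ?upper"
    then show "T \<in> ?lower"
      using signed_sum_complement by fastforce
  qed
  moreover have "inj_on (\<lambda>T. X - T) ?upper"
    by (rule inj_onI) auto
  ultimately have "card ?lower = card ?upper"
    by (simp add: card_image)
  moreover have "{T \<in> Pow X. u \<le> \<bar>signed_sum d X T\<bar>} = ?upper \<union> ?lower"
    by auto
  ultimately have "card {T \<in> Pow X. u \<le> \<bar>signed_sum d X T\<bar>} \<le> 2 * card ?upper"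
    using card_Un_le[of ?upper ?lower] by simp
  then show ?thesis
    using signed_sum_abs_tail[OF assms] by linarith
qed

lemma sum_card_Collect_swap:
  assumes "finite A" "finite B"
  shows "(\<Sum>x\<in>A. card {y \<in> B. R x y}) = (\<Sum>y\<in>B. card {x \<in> A. R x y})"
  using sum.swap_restrict[OF assms, of "\<lambda>_ _. 1 :: nat" R] by simp

lemma sum_le_card_ge:
  fixes f :: "'a \<Rightarrow> real"
  assumes "finite S" "0 \<le> t" "\<And>x. x \<in> S \<Longrightarrow> f x \<le> M"
  shows "sum f S \<le> M * card {x \<in> S. t \<le> f x} + t * card S"
proof -
  have "f x \<le> (if t \<le> f x then M else 0) + t" if "x \<in> S" for x
    using assms(2) assms(3)[OF that] by auto
  then have "sum f S \<le> (\<Sum>x\<in>S. (if t \<le> f x then M else 0) + t)"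
    by (rule sum_mono)
  also have "\<dots> = M * card {x \<in> S. t \<le> f x} + t * card S"
    using assms(1) by (simp add: sum.distrib sum.If_cases Int_def mult.commute)
  finally show ?thesis .
qed

definition signed_indicator :: "nat set \<Rightarrow> nat set \<Rightarrow> nat \<Rightarrow> real" where
  "signed_indicator P Q z = (if z \<in> P then 1 else if z \<in> Q then -1 else 0)"

lemma sum_signed_indicator:
  assumes "P \<inter> Q = {}" "finite A"
  shows "(\<Sum>u\<in>A. signed_indicator P Q u) = real (card (A \<inter> P)) - real (card (A \<inter> Q))"
proof -
  have "(\<Sum>u\<in>A. signed_indicator P Q u) = (\<Sum>u\<in>A. of_bool (u \<in> P) - of_bool (u \<in> Q))"
    using assms(1) by (intro sum.cong) (auto simp: signed_indicator_def)
  then show ?thesis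
    using assms(2) by (simp add: sum_subtractf Int_def)
qed

type_synonym triple = "nat set \<times> nat set \<times> nat set"

definition triples :: "nat \<Rightarrow> nat \<Rightarrow> nat \<Rightarrow> triple set" where
  "triples n a b = {(A1, A2, B). A1 \<subseteq> {1..n} \<and> A2 \<subseteq> {1..n} \<and> B \<subseteq> {1..n}
     \<and> A1 \<inter> A2 = {} \<and> A1 \<inter> B = {} \<and> A2 \<inter> B = {}
     \<and> card A1 = b \<and> card A2 = a - b \<and> card B = b}"

fun merge :: "triple \<Rightarrow> nat set \<times> nat set" where
  "merge (A1, A2, B) = (A1 \<union> A2, B)"

fun swap_ends :: "triple \<Rightarrow> triple" where
  "swap_ends (A1, A2, B) = (B, A2, A1)"

fun map_triple :: "(nat \<Rightarrow> nat) \<Rightarrow> triple \<Rightarrow> triple" where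
  "map_triple \<pi> (A1, A2, B) = (\<pi> ` A1, \<pi> ` A2, \<pi> ` B)"

fun weight :: "triple \<Rightarrow> nat \<Rightarrow> real" where
  "weight (A1, A2, B) u = (if u \<in> A1 \<union> A2 then 1 else if u \<in> B then -1 else 0)"

lemma finite_triples: "finite (triples n a b)"
proof (rule finite_subset)
  show "triples n a b \<subseteq> Pow {1..n} \<times> Pow {1..n} \<times> Pow {1..n}"
    unfolding triples_def by auto
qed simp

lemma finite_disj_pairs: "finite (disj_pairs n a b)"
proof (rule finite_subset)
  show "disj_pairs n a b \<subseteq> Pow {1..n} \<times> Pow {1..n}"
    unfolding disj_pairs_def by auto
qed simp

lemma merge_triples:
  assumes "L \<in> triples n a b" "b \<le> a"
  shows "merge L \<in> disj_pairs n a b"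
proof -
  obtain A1 A2 B where L: "L = (A1, A2, B)"
    by (cases L)
  have "finite A1" "finite A2"
    using assms(1) unfolding L triples_def by (auto intro: finite_subset)
  then have "card (A1 \<union> A2) = a"
    using assms unfolding L triples_def by (simp add: card_Un_disjoint)
  then show ?thesis
    using assms(1) unfolding L triples_def disj_pairs_def by auto
qed

lemma card_merge_fiber:
  assumes "(A, B) \<in> disj_pairs n a b"
  shows "card {L \<in> triples n a b. merge L = (A, B)} = a choose b"
proof -
  have A: "finite A" "card A = a"
    using assms unfolding disj_pairs_def by (auto intro: finite_subset)
  have "{L \<in> triples n a b. merge L = (A, B)} = (\<lambda>A1. (A1, A - A1, B)) ` {A1. A1 \<subseteq> A \<and> card A1 = b}"
  proof (intro equalityI subsetI)
    fix L assume "L \<in> {L \<in> triples n a b. merge L = (A, B)}"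
    then obtain A1 A2 where "L = (A1, A2, B)" "A1 \<union> A2 = A" "A1 \<inter> A2 = {}" "card A1 = b"
      unfolding triples_def by (cases L) auto
    then show "L \<in> (\<lambda>A1. (A1, A - A1, B)) ` {A1. A1 \<subseteq> A \<and> card A1 = b}"
      by (auto intro!: image_eqI[of _ _ A1])
  next
    fix L assume "L \<in> (\<lambda>A1. (A1, A - A1, B)) ` {A1. A1 \<subseteq> A \<and> card A1 = b}"
    then obtain A1 where L: "L = (A1, A - A1, B)" "A1 \<subseteq> A" "card A1 = b"
      by auto
    then have "card (A - A1) = a - b"
      using A by (simp add: card_Diff_subset finite_subset)
    then show "L \<in> {L \<in> triples n a b. merge L = (A, B)}"
      using L assms unfolding triples_def disj_pairs_def by auto
  qed
  moreover have "inj_on (\<lambda>A1. (A1, A - A1, B)) {A1. A1 \<subseteq> A \<and> card A1 = b}"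
    by (auto intro: inj_onI)
  ultimately show ?thesis
    using n_subsets[OF A(1), of b] A(2) by (simp add: card_image)
qed

lemma card_triples_merge:
  assumes "b \<le> a"
  shows "card {L \<in> triples n a b. \<Phi> (merge L)} = (a choose b) * card {p \<in> disj_pairs n a b. \<Phi> p}"
proof -
  let ?fiber = "\<lambda>p. {L \<in> triples n a b. merge L = p}"
  have "{L \<in> triples n a b. \<Phi> (merge L)} = (\<Union>p\<in>{p \<in> disj_pairs n a b. \<Phi> p}. ?fiber p)"
    using merge_triples[OF _ assms] by auto
  also have "card \<dots> = (\<Sum>p\<in>{p \<in> disj_pairs n a b. \<Phi> p}. card (?fiber p))"
    by (rule card_UN_disjoint) (auto simp: finite_disj_pairs finite_triples)
  also have "\<dots> = (\<Sum>p\<in>{p \<in> disj_pairs n a b. \<Phi> p}. a choose b)"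
    using card_merge_fiber by (intro sum.cong) auto
  finally show ?thesis
    by simp
qed

definition Z_triple :: "nat set \<Rightarrow> nat set \<Rightarrow> nat \<Rightarrow> triple \<Rightarrow> real" where
  "Z_triple P Q n L = (\<Sum>u\<in>{1..n}. signed_indicator P Q u * weight L u)"

lemma Zstat_merge:
  assumes "P \<inter> Q = {}" "L \<in> triples n a b"
  shows "real_of_int (Zstat P Q (fst (merge L)) (snd (merge L))) = Z_triple P Q n L"
proof -
  obtain A1 A2 B where L: "L = (A1, A2, B)"
    by (cases L)
  have sub: "A1 \<union> A2 \<subseteq> {1..n}" "B \<subseteq> {1..n}" and disj: "(A1 \<union> A2) \<inter> B = {}"
    using assms(2) unfolding L triples_def by auto
  then have fin: "finite (A1 \<union> A2)" "finite B"
    by (auto intro: finite_subset)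
  have "Z_triple P Q n L
      = (\<Sum>u\<in>{1..n}. (if u \<in> A1 \<union> A2 then signed_indicator P Q u else 0)
                      - (if u \<in> B then signed_indicator P Q u else 0))"
    unfolding L Z_triple_def using disj by (intro sum.cong) auto
  also have "\<dots> = (\<Sum>u\<in>A1 \<union> A2. signed_indicator P Q u) - (\<Sum>u\<in>B. signed_indicator P Q u)"
  proof -
    have "{1..n} \<inter> {u. u \<in> A1 \<or> u \<in> A2} = A1 \<union> A2" "{1..n} \<inter> B = B"
      using sub by auto
    then show ?thesis
      by (simp add: sum_subtractf sum.If_cases)
  qed
  finally show ?thesis
    unfolding L using fin
    by (simp add: sum_signed_indicator[OF assms(1)] Zstat_def)
qed

lemma card_Z_triple_ge_eq:
  assumes "P \<inter> Q = {}" "b \<le> a"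
  shows "card {L \<in> triples n a b. t \<le> Z_triple P Q n L}
           = (a choose b) * card {(A, B) \<in> disj_pairs n a b. t \<le> real_of_int (Zstat P Q A B)}"
proof -
  have "{L \<in> triples n a b. t \<le> Z_triple P Q n L}
      = {L \<in> triples n a b. t \<le> real_of_int (Zstat P Q (fst (merge L)) (snd (merge L)))}"
    using Zstat_merge[OF assms(1)] by auto
  also have "card \<dots> = (a choose b) * card {p \<in> disj_pairs n a b. t \<le> real_of_int (Zstat P Q (fst p) (snd p))}"
    using assms(2) by (rule card_triples_merge)
  also have "{p \<in> disj_pairs n a b. t \<le> real_of_int (Zstat P Q (fst p) (snd p))}
      = {(A, B) \<in> disj_pairs n a b. t \<le> real_of_int (Zstat P Q A B)}"
    by auto
  finally show ?thesis .
qed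

lemma card_triples: "b \<le> a \<Longrightarrow> card (triples n a b) = (a choose b) * card (disj_pairs n a b)"
  using card_triples_merge[of b a n "\<lambda>_. True"] by simp

lemma map_triple_comp: "map_triple f (map_triple g L) = map_triple (f \<circ> g) L"
  by (cases L) (simp add: image_comp)

lemma map_triple_id: "map_triple id L = L"
  by (cases L) simp

lemma map_triple_triples:
  assumes "\<pi> permutes {1..n}" "L \<in> triples n a b"
  shows "map_triple \<pi> L \<in> triples n a b"
proof -
  obtain A1 A2 B where L: "L = (A1, A2, B)"
    by (cases L)
  have "inj \<pi>"
    using assms(1) by (rule permutes_inj)
  moreover have "\<pi> ` A \<subseteq> {1..n}" if "A \<subseteq> {1..n}" for A
    using that permutes_image[OF assms(1)] by blast
  ultimately show ?thesis
    using assms(2) unfolding L triples_def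
    by (simp add: card_image inj_on_subset image_Int[symmetric])
qed

lemma card_triples_map_triple:
  assumes "\<pi> permutes {1..n}"
  shows "card {L \<in> triples n a b. \<Phi> (map_triple \<pi> L)} = card {L \<in> triples n a b. \<Phi> L}"
proof (rule bij_betw_same_card)
  have inv: "inv \<pi> permutes {1..n}"
    using assms by (rule permutes_inv)
  have "map_triple \<pi> (map_triple (inv \<pi>) L) = L" "map_triple (inv \<pi>) (map_triple \<pi> L) = L" for L
    by (simp_all only: map_triple_comp permutes_inv_o[OF assms] map_triple_id)
  then show "bij_betw (map_triple \<pi>) {L \<in> triples n a b. \<Phi> (map_triple \<pi> L)} {L \<in> triples n a b. \<Phi> L}"
    using map_triple_triples[OF assms] map_triple_triples[OF inv]
    by (intro bij_betw_byWitness[of _ "map_triple (inv \<pi>)"]) (auto simp del: map_triple.simps)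
qed

lemma weight_map_triple: "inj \<pi> \<Longrightarrow> weight (map_triple \<pi> L) (\<pi> u) = weight L u"
  by (cases L) (simp add: inj_image_mem_iff)

lemma swap_ends_map_triple: "swap_ends (map_triple \<pi> L) = map_triple \<pi> (swap_ends L)"
  by (cases L) simp

lemma swap_ends_swap_ends [simp]: "swap_ends (swap_ends L) = L"
  by (cases L) simp

lemma swap_ends_triples: "L \<in> triples n a b \<Longrightarrow> swap_ends L \<in> triples n a b"
  by (cases L) (auto simp: triples_def)

lemma weight_add_weight_swap_ends_nonneg:
  "L \<in> triples n a b \<Longrightarrow> 0 \<le> weight L v + weight (swap_ends L) v"
  by (cases L) (auto simp: triples_def)

lemma weight_cases: "weight L u \<in> {-1, 0, 1}"
  by (cases L) simp

definition separates :: "triple \<Rightarrow> nat \<Rightarrow> nat \<Rightarrow> bool" where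
  "separates L x y \<longleftrightarrow> weight L x \<noteq> weight L y \<and> weight (swap_ends L) x \<noteq> weight (swap_ends L) y"

lemma separates_swap_ends: "separates (swap_ends L) x y = separates L x y"
  by (auto simp: separates_def)

lemma separates_map_triple: "inj \<pi> \<Longrightarrow> separates (map_triple \<pi> L) (\<pi> x) (\<pi> y) = separates L x y"
  by (simp add: separates_def swap_ends_map_triple weight_map_triple)

lemma permutes_map_pair:
  assumes "x \<in> S" "y \<in> S" "x' \<in> S" "y' \<in> S" "x \<noteq> y" "x' \<noteq> y'"
  obtains \<pi> where "\<pi> permutes S" "\<pi> x = x'" "\<pi> y = y'"
proof -
  let ?s = "transpose x x'"
  let ?\<pi> = "transpose (?s y) y' \<circ> ?s"
  have "?s y \<in> S"
    using assms by (auto simp: transpose_def)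
  then have "?\<pi> permutes S"
    using assms by (intro permutes_compose permutes_swap_id)
  moreover have "?s y \<noteq> x'"
    using assms(5) by (auto simp: transpose_def)
  then have "?\<pi> x = x'"
    using assms(6) by (simp add: transpose_def)
  moreover have "?\<pi> y = y'"
    by simp
  ultimately show thesis
    by (rule that)
qed

lemma card_separating_eq:
  assumes "x \<in> {1..n}" "y \<in> {1..n}" "x' \<in> {1..n}" "y' \<in> {1..n}" "x \<noteq> y" "x' \<noteq> y'"
  shows "card {L \<in> triples n a b. separates L x y} = card {L \<in> triples n a b. separates L x' y'}"
proof -
  obtain \<pi> where \<pi>: "\<pi> permutes {1..n}" "\<pi> x = x'" "\<pi> y = y'"
    using permutes_map_pair[OF assms] .
  have "card {L \<in> triples n a b. separates L x' y'}
      = card {L \<in> triples n a b. separates (map_triple \<pi> L) (\<pi> x) (\<pi> y)}"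
    unfolding \<pi>(2,3) by (rule card_triples_map_triple[OF \<pi>(1), symmetric])
  also have "\<dots> = card {L \<in> triples n a b. separates L x y}"
    using separates_map_triple[OF permutes_inj[OF \<pi>(1)]] by simp
  finally show ?thesis
    by simp
qed

lemma separates_commute: "separates L x y = separates L y x"
  by (auto simp: separates_def)

lemma separates_first_last:
  assumes "(A1, A2, B) \<in> triples n a b" "x \<in> A1" "y \<in> B"
  shows "separates (A1, A2, B) x y"
  using assms unfolding triples_def separates_def by auto

lemma separates_support_outside:
  assumes "x \<in> A1 \<union> A2 \<union> B" "y \<notin> A1 \<union> A2 \<union> B"
  shows "separates (A1, A2, B) x y"
  using assms by (auto simp: separates_def)

lemma card_separated_pairs_ge:
  assumes "L \<in> triples n a b" "b \<le> a"
  shows "2 * b * b + (a + b) * (n - (a + b))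
           \<le> card {(x, y) \<in> {1..n} \<times> {1..n}. x \<noteq> y \<and> separates L x y}"
proof -
  obtain A1 A2 B where L: "L = (A1, A2, B)"
    by (cases L)
  have h: "A1 \<subseteq> {1..n}" "A2 \<subseteq> {1..n}" "B \<subseteq> {1..n}" "A1 \<inter> A2 = {}" "A1 \<inter> B = {}" "A2 \<inter> B = {}"
    "card A1 = b" "card A2 = a - b" "card B = b"
    using assms(1) unfolding L triples_def by auto
  then have fin: "finite A1" "finite A2" "finite B"
    by (auto intro: finite_subset)
  define D where "D = A1 \<union> A2 \<union> B"
  define K where "K = {1..n} - D"
  have "card D = a + b"
    using h fin assms(2) unfolding D_def by (simp add: card_Un_disjoint Int_Un_distrib2)
  moreover have "card K = n - card D"
    using h fin unfolding K_def D_def by (simp add: card_Diff_subset)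
  ultimately have card_eq: "card (A1 \<times> B \<union> B \<times> A1 \<union> D \<times> K) = 2 * b * b + (a + b) * (n - (a + b))"
  proof -
    have "card (A1 \<times> B \<union> B \<times> A1 \<union> D \<times> K) = card (A1 \<times> B \<union> B \<times> A1) + card (D \<times> K)"
      using fin unfolding K_def D_def by (intro card_Un_disjoint) auto
    also have "card (A1 \<times> B \<union> B \<times> A1) = card (A1 \<times> B) + card (B \<times> A1)"
      using fin h by (intro card_Un_disjoint) auto
    finally show ?thesis
      using h \<open>card D = a + b\<close> \<open>card K = n - card D\<close> by (simp add: card_cartesian_product)
  qed
  have "separates L x y \<and> separates L y x" if "x \<in> A1" "y \<in> B" for x y
    using separates_first_last[OF assms(1)[unfolded L] that] separates_commute unfolding L by blast
  moreover have "separates L x y" if "x \<in> D" "y \<notin> D" for x y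
    using separates_support_outside that unfolding L D_def by blast
  moreover have "D \<subseteq> {1..n}"
    using h unfolding D_def by auto
  ultimately have "A1 \<times> B \<union> B \<times> A1 \<union> D \<times> K \<subseteq> {(x, y) \<in> {1..n} \<times> {1..n}. x \<noteq> y \<and> separates L x y}"
    using h unfolding K_def by blast
  then have "card (A1 \<times> B \<union> B \<times> A1 \<union> D \<times> K) \<le> card {(x, y) \<in> {1..n} \<times> {1..n}. x \<noteq> y \<and> separates L x y}"
    by (intro card_mono) (auto intro: finite_subset[of _ "{1..n} \<times> {1..n}"])
  then show ?thesis
    using card_eq by simp
qed

lemma card_triples_separating_ge:
  assumes "b \<le> a" "x \<in> {1..n}" "y \<in> {1..n}" "x \<noteq> y"
  shows "card (triples n a b) * (2 * b * b + (a + b) * (n - (a + b)))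
           \<le> n^2 * card {L \<in> triples n a b. separates L x y}"
proof -
  let ?count = "\<lambda>x y. card {L \<in> triples n a b. separates L x y}"
  let ?pairs = "{(x, y) \<in> {1..n} \<times> {1..n}. x \<noteq> y}"
  have count: "?count x' y' = ?count x y" if "x' \<in> {1..n}" "y' \<in> {1..n}" "x' \<noteq> y'" for x' y'
    using that assms(2-4) by (intro card_separating_eq)
  have "card (triples n a b) * (2 * b * b + (a + b) * (n - (a + b)))
      = (\<Sum>L\<in>triples n a b. 2 * b * b + (a + b) * (n - (a + b)))"
    by simp
  also have "\<dots> \<le> (\<Sum>L\<in>triples n a b. card {p \<in> ?pairs. separates L (fst p) (snd p)})"
  proof (rule sum_mono)
    fix L assume "L \<in> triples n a b"
    moreover have "{p \<in> ?pairs. separates L (fst p) (snd p)}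
        = {(x, y) \<in> {1..n} \<times> {1..n}. x \<noteq> y \<and> separates L x y}"
      by auto
    ultimately show "2 * b * b + (a + b) * (n - (a + b)) \<le> card {p \<in> ?pairs. separates L (fst p) (snd p)}"
      using card_separated_pairs_ge[OF _ assms(1)] by simp
  qed
  also have "\<dots> = (\<Sum>p\<in>?pairs. ?count (fst p) (snd p))"
    using finite_triples by (intro sum_card_Collect_swap) (auto intro: finite_subset[of _ "{1..n} \<times> {1..n}"])
  also have "\<dots> = card ?pairs * ?count x y"
    using count by (simp add: case_prod_beta)
  also have "\<dots> \<le> n^2 * ?count x y"
    using card_mono[of "{1..n} \<times> {1..n}" ?pairs] by (simp add: power2_eq_square card_cartesian_product subset_iff)
  finally show ?thesis .
qed

lemma separated_pairs_lower_bound: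
  fixes \<eta> :: real
  assumes \<eta>: "0 < \<eta>" "\<eta> \<le> 1" and "b \<le> a" and a: "real a \<le> (1 - \<eta>) * real n"
  shows "\<eta>^2 / 2 * real a * real n \<le> real (2 * b * b + (a + b) * (n - (a + b)))"
proof (cases "\<eta> * real n / 2 \<le> real b")
  case True
  have "(1 - \<eta>) * real n \<le> real n"
    using \<eta> by (simp add: mult_left_le_one_le)
  then have "real a \<le> real n"
    using a by linarith
  then have "\<eta>^2 / 2 * real a * real n \<le> 2 * (\<eta> * real n / 2) * (\<eta> * real n / 2)"
    using \<eta> by (simp add: power2_eq_square mult_right_mono)
  also have "\<dots> \<le> 2 * real b * real b"
    using True \<eta> by (intro mult_mono) auto
  also have "\<dots> \<le> real (2 * b * b + (a + b) * (n - (a + b)))"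
    by simp
  finally show ?thesis .
next
  case False
  then have "real a + real b \<le> real n"
    using a \<eta> by (simp add: algebra_simps)
  then have "a + b \<le> n" and "\<eta> * real n / 2 \<le> real (n - (a + b))"
    using False a by (simp_all add: of_nat_diff algebra_simps)
  have "\<eta>^2 / 2 * real a * real n \<le> real a * (\<eta> * real n / 2)"
    using \<eta> by (simp add: power2_eq_square mult_left_le_one_le)
  also have "\<dots> \<le> real (a + b) * real (n - (a + b))"
    using \<open>\<eta> * real n / 2 \<le> real (n - (a + b))\<close> \<eta> by (intro mult_mono) auto
  also have "\<dots> \<le> real (2 * b * b + (a + b) * (n - (a + b)))"
    by simp
  finally show ?thesis .
qed

locale pairing =
  fixes n :: nat and P Q X :: "nat set" and \<beta> :: "nat \<Rightarrow> nat"
  assumes P_sub: "P \<subseteq> {1..n}" and X_sub: "X \<subseteq> P"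
    and \<beta>_range: "\<beta> ` X \<subseteq> {1..n} - P" and inj_\<beta>: "inj_on \<beta> X" and Q_sub: "Q \<subseteq> \<beta> ` X"
begin

definition swap_pairs :: "nat set \<Rightarrow> nat \<Rightarrow> nat" where
  "swap_pairs T v = (if v \<in> T then \<beta> v else if v \<in> \<beta> ` T then the_inv_into X \<beta> v else v)"

definition common_part :: "triple \<Rightarrow> real" where
  "common_part L =
     (\<Sum>x\<in>X. (signed_indicator P Q x + signed_indicator P Q (\<beta> x)) * (weight L x + weight L (\<beta> x)))
     + 2 * (\<Sum>v\<in>{1..n} - X - \<beta> ` X. signed_indicator P Q v * weight L v)"

definition pair_diff :: "triple \<Rightarrow> nat \<Rightarrow> real" where
  "pair_diff L x = (signed_indicator P Q x - signed_indicator P Q (\<beta> x)) * (weight L x - weight L (\<beta> x))"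

definition num_separated :: "triple \<Rightarrow> nat" where
  "num_separated L = card {x \<in> X. separates L x (\<beta> x)}"

lemma X_sub_interval: "X \<subseteq> {1..n}"
  using X_sub P_sub by auto

lemma finite_X: "finite X"
  using X_sub_interval by (rule finite_subset) simp

lemma \<beta>_notin_X: "x \<in> X \<Longrightarrow> \<beta> x \<notin> X"
  using X_sub \<beta>_range by auto

lemma \<beta>_in_interval: "x \<in> X \<Longrightarrow> \<beta> x \<in> {1..n}"
  using \<beta>_range by auto

lemma swap_pairs_X: "T \<subseteq> X \<Longrightarrow> x \<in> X \<Longrightarrow> swap_pairs T x = (if x \<in> T then \<beta> x else x)"
  unfolding swap_pairs_def using \<beta>_notin_X by auto

lemma swap_pairs_\<beta>: "T \<subseteq> X \<Longrightarrow> x \<in> X \<Longrightarrow> swap_pairs T (\<beta> x) = (if x \<in> T then x else \<beta> x)"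
  unfolding swap_pairs_def using \<beta>_notin_X inj_\<beta>
  by (auto simp: inj_on_image_mem_iff the_inv_into_f_f subset_iff)

lemma swap_pairs_other: "v \<notin> X \<Longrightarrow> v \<notin> \<beta> ` X \<Longrightarrow> T \<subseteq> X \<Longrightarrow> swap_pairs T v = v"
  unfolding swap_pairs_def by auto

lemma swap_pairs_swap_pairs:
  assumes "T \<subseteq> X"
  shows "swap_pairs T (swap_pairs T v) = v"
proof -
  consider "v \<in> X" | x where "x \<in> X" "v = \<beta> x" | "v \<notin> X" "v \<notin> \<beta> ` X"
    by blast
  then show ?thesis
    by cases (use assms in \<open>simp_all add: swap_pairs_X swap_pairs_\<beta> swap_pairs_other\<close>)
qed

lemma swap_pairs_permutes:
  assumes "T \<subseteq> X"
  shows "swap_pairs T permutes {1..n}"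
proof (rule inj_imp_permutes)
  show "inj_on (swap_pairs T) {1..n}"
    by (metis inj_on_inverseI swap_pairs_swap_pairs[OF assms])
  show "swap_pairs T v \<in> {1..n}" if "v \<in> {1..n}" for v
  proof -
    consider "v \<in> X" | x where "x \<in> X" "v = \<beta> x" | "v \<notin> X" "v \<notin> \<beta> ` X"
      by blast
    then show ?thesis
      by cases (use assms that X_sub_interval \<beta>_in_interval in
          \<open>auto simp: swap_pairs_X swap_pairs_\<beta> swap_pairs_other\<close>)
  qed
  show "swap_pairs T v = v" if "v \<notin> {1..n}" for v
    using that assms X_sub_interval \<beta>_range by (intro swap_pairs_other) auto
qed simp

lemma weight_map_swap_pairs:
  "T \<subseteq> X \<Longrightarrow> weight (map_triple (swap_pairs T) L) u = weight L (swap_pairs T u)"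
  using weight_map_triple[OF permutes_inj[OF swap_pairs_permutes], of T L "swap_pairs T u"]
  by (simp add: swap_pairs_swap_pairs)

lemma sum_interval_pairs:
  "(\<Sum>v\<in>{1..n}. g v) = (\<Sum>x\<in>X. g x + g (\<beta> x)) + (\<Sum>v\<in>{1..n} - X - \<beta> ` X. g v)"
proof -
  have "{1..n} = X \<union> (\<beta> ` X \<union> ({1..n} - X - \<beta> ` X))"
    using X_sub_interval \<beta>_range by auto
  also have "sum g \<dots> = sum g X + sum g (\<beta> ` X \<union> ({1..n} - X - \<beta> ` X))"
    using finite_X \<beta>_notin_X by (intro sum.union_disjoint) auto
  also have "sum g (\<beta> ` X \<union> ({1..n} - X - \<beta> ` X)) = sum g (\<beta> ` X) + sum g ({1..n} - X - \<beta> ` X)"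
    using finite_X by (intro sum.union_disjoint) auto
  also have "(\<Sum>v\<in>\<beta> ` X. g v) = (\<Sum>x\<in>X. g (\<beta> x))"
    using inj_\<beta> by (simp add: sum.reindex)
  finally show ?thesis
    by (simp add: sum.distrib add.assoc)
qed

lemma Z_triple_swap_pairs:
  assumes T: "T \<subseteq> X"
  shows "2 * Z_triple P Q n (map_triple (swap_pairs T) L) = common_part L + signed_sum (pair_diff L) X T"
proof -
  let ?f = "signed_indicator P Q" and ?\<psi> = "swap_pairs T"
  have "Z_triple P Q n (map_triple ?\<psi> L) = (\<Sum>u\<in>{1..n}. ?f u * weight L (?\<psi> u))"
    unfolding Z_triple_def using T by (simp add: weight_map_swap_pairs)
  also have "\<dots> = (\<Sum>v\<in>{1..n}. ?f (?\<psi> v) * weight L v)"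
    using sum.permute[OF swap_pairs_permutes[OF T], of "\<lambda>v. ?f (?\<psi> v) * weight L v"]
    by (simp add: swap_pairs_swap_pairs[OF T])
  also have "\<dots> = (\<Sum>x\<in>X. ?f (?\<psi> x) * weight L x + ?f (?\<psi> (\<beta> x)) * weight L (\<beta> x))
                  + (\<Sum>v\<in>{1..n} - X - \<beta> ` X. ?f v * weight L v)"
    unfolding sum_interval_pairs using T by (auto simp: swap_pairs_other intro: sum.cong)
  finally have "2 * Z_triple P Q n (map_triple ?\<psi> L)
      = (\<Sum>x\<in>X. 2 * (?f (?\<psi> x) * weight L x + ?f (?\<psi> (\<beta> x)) * weight L (\<beta> x)))
        + 2 * (\<Sum>v\<in>{1..n} - X - \<beta> ` X. ?f v * weight L v)"
    by (simp add: sum_distrib_left)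
  also have "\<dots> = common_part L + signed_sum (pair_diff L) X T"
  proof -
    have "2 * (?f (?\<psi> x) * weight L x + ?f (?\<psi> (\<beta> x)) * weight L (\<beta> x))
        = (?f x + ?f (\<beta> x)) * (weight L x + weight L (\<beta> x))
          + (if x \<in> T then - pair_diff L x else pair_diff L x)" if "x \<in> X" for x
      using that T by (simp add: swap_pairs_X swap_pairs_\<beta> pair_diff_def algebra_simps)
    then show ?thesis
      unfolding common_part_def signed_sum_def by (simp add: sum.distrib)
  qed
  finally show ?thesis .
qed

lemma common_part_swap_ends_nonneg:
  assumes "L \<in> triples n a b"
  shows "0 \<le> common_part L + common_part (swap_ends L)"
proof -
  let ?f = "signed_indicator P Q" and ?W = "\<lambda>v. weight L v + weight (swap_ends L) v"
  note W = weight_add_weight_swap_ends_nonneg[OF assms]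
  have "0 \<le> ?f x + ?f (\<beta> x)" if "x \<in> X" for x
    using that X_sub \<beta>_range by (auto simp: signed_indicator_def)
  then have "0 \<le> (\<Sum>x\<in>X. (?f x + ?f (\<beta> x)) * (?W x + ?W (\<beta> x)))"
    by (intro sum_nonneg mult_nonneg_nonneg[OF _ add_nonneg_nonneg[OF W W]])
  moreover have "0 \<le> ?f v" if "v \<in> {1..n} - X - \<beta> ` X" for v
    using that Q_sub by (auto simp: signed_indicator_def)
  then have "0 \<le> (\<Sum>v\<in>{1..n} - X - \<beta> ` X. ?f v * ?W v)"
    by (intro sum_nonneg mult_nonneg_nonneg[OF _ W])
  ultimately have "0 \<le> (\<Sum>x\<in>X. (?f x + ?f (\<beta> x)) * (?W x + ?W (\<beta> x)))
                      + 2 * (\<Sum>v\<in>{1..n} - X - \<beta> ` X. ?f v * ?W v)"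
    by simp
  also have "\<dots> = common_part L + common_part (swap_ends L)"
    unfolding common_part_def by (simp add: sum.distrib algebra_simps)
  finally show ?thesis .
qed

lemma pair_diff_sq_ge_one:
  assumes "x \<in> X" "separates L x (\<beta> x)"
  shows "1 \<le> (pair_diff L x)^2"
proof -
  have "1 \<le> signed_indicator P Q x - signed_indicator P Q (\<beta> x)"
    using assms(1) X_sub \<beta>_range by (auto simp: signed_indicator_def)
  moreover have "1 \<le> \<bar>weight L x - weight L (\<beta> x)\<bar>"
    using assms(2) weight_cases[of L x] weight_cases[of L "\<beta> x"] by (auto simp: separates_def)
  ultimately have "1 * 1 \<le> \<bar>pair_diff L x\<bar>"
    unfolding pair_diff_def abs_mult by (intro mult_mono) auto
  then show ?thesis
    using one_le_power[of "\<bar>pair_diff L x\<bar>" 2] by simp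
qed

lemma num_separated_le_sum_sq: "real (num_separated L) \<le> (\<Sum>x\<in>X. (pair_diff L x)^2)"
proof -
  have "real (num_separated L) = (\<Sum>x\<in>X. of_bool (separates L x (\<beta> x)))"
    using finite_X by (simp add: num_separated_def Int_def)
  also have "\<dots> \<le> (\<Sum>x\<in>X. (pair_diff L x)^2)"
    by (intro sum_mono) (simp add: pair_diff_sq_ge_one)
  finally show ?thesis .
qed

lemma num_separated_le:
  assumes "L \<in> triples n a b" "b \<le> a"
  shows "num_separated L \<le> 2 * (a + b)"
proof -
  obtain A1 A2 B where L: "L = (A1, A2, B)"
    by (cases L)
  define D where "D = A1 \<union> A2 \<union> B"
  have "finite D" "card D = a + b"
    using assms finite_subset[of _ "{1..n}"] unfolding L D_def triples_def
    by (auto simp: card_Un_disjoint Int_Un_distrib2)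
  have zero: "weight L v = 0 \<and> weight (swap_ends L) v = 0" if "v \<notin> D" for v
    using that unfolding L D_def by auto
  have "{x \<in> X. separates L x (\<beta> x)} \<subseteq> {x \<in> X. x \<in> D} \<union> {x \<in> X. \<beta> x \<in> D}"
  proof
    fix x assume "x \<in> {x \<in> X. separates L x (\<beta> x)}"
    then show "x \<in> {x \<in> X. x \<in> D} \<union> {x \<in> X. \<beta> x \<in> D}"
      using zero[of x] zero[of "\<beta> x"] by (cases "x \<in> D") (auto simp: separates_def)
  qed
  then have "num_separated L \<le> card ({x \<in> X. x \<in> D} \<union> {x \<in> X. \<beta> x \<in> D})"
    unfolding num_separated_def using finite_X by (intro card_mono) auto
  also have "\<dots> \<le> card {x \<in> X. x \<in> D} + card {x \<in> X. \<beta> x \<in> D}"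
    by (rule card_Un_le)
  also have "\<dots> \<le> card D + card D"
    using \<open>finite D\<close> inj_\<beta> by (intro add_mono card_inj_on_le[of \<beta>] card_mono) (auto intro: inj_on_subset)
  finally show ?thesis
    using \<open>card D = a + b\<close> by simp
qed

lemma num_separated_swap_ends: "num_separated (swap_ends L) = num_separated L"
  by (simp add: num_separated_def separates_swap_ends)

lemma card_triples_average_swap_pairs:
  "2 ^ card X * card {L \<in> triples n a b. \<Phi> L}
     = (\<Sum>L\<in>triples n a b. card {T \<in> Pow X. \<Phi> (map_triple (swap_pairs T) L)})"
proof -
  have "(\<Sum>L\<in>triples n a b. card {T \<in> Pow X. \<Phi> (map_triple (swap_pairs T) L)})
      = (\<Sum>T\<in>Pow X. card {L \<in> triples n a b. \<Phi> (map_triple (swap_pairs T) L)})"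
    using finite_X finite_triples by (intro sum_card_Collect_swap) auto
  also have "\<dots> = (\<Sum>T\<in>Pow X. card {L \<in> triples n a b. \<Phi> L})"
    using card_triples_map_triple[OF swap_pairs_permutes] by (intro sum.cong) auto
  finally show ?thesis
    using finite_X by (simp add: card_Pow)
qed

lemma sum_num_separated_ge:
  assumes "b \<le> a"
  shows "card X * (card (triples n a b) * (2 * b * b + (a + b) * (n - (a + b))))
           \<le> n^2 * (\<Sum>L\<in>triples n a b. num_separated L)"
proof -
  have "card X * (card (triples n a b) * (2 * b * b + (a + b) * (n - (a + b))))
      = (\<Sum>x\<in>X. card (triples n a b) * (2 * b * b + (a + b) * (n - (a + b))))"
    by simp
  also have "\<dots> \<le> (\<Sum>x\<in>X. n^2 * card {L \<in> triples n a b. separates L x (\<beta> x)})"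
  proof (intro sum_mono card_triples_separating_ge[OF assms])
    fix x assume "x \<in> X"
    then show "x \<in> {1..n}" "\<beta> x \<in> {1..n}" "x \<noteq> \<beta> x"
      using X_sub_interval \<beta>_in_interval[of x] \<beta>_notin_X[of x] by auto
  qed
  also have "\<dots> = n^2 * (\<Sum>L\<in>triples n a b. num_separated L)"
    unfolding num_separated_def sum_distrib_left[symmetric]
    using sum_card_Collect_swap[OF finite_triples finite_X, where R = "\<lambda>L x. separates L x (\<beta> x)"]
    by simp
  finally show ?thesis .
qed

lemma card_swap_pairs_Z_triple_ge:
  assumes "0 \<le> common_part L" "0 < t" "16 * t^2 \<le> real (num_separated L)"
  shows "2 ^ card X \<le> 12 * card {T \<in> Pow X. t \<le> Z_triple P Q n (map_triple (swap_pairs T) L)}"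
proof -
  have "4 * (2 * t)^2 \<le> (\<Sum>x\<in>X. (pair_diff L x)^2)"
    using assms(3) num_separated_le_sum_sq[of L] by (simp add: power2_eq_square)
  then have "2 ^ card X \<le> 12 * card {T \<in> Pow X. 2 * t \<le> signed_sum (pair_diff L) X T}"
    using signed_sum_tail[OF finite_X] assms(2) by simp
  also have "\<dots> \<le> 12 * card {T \<in> Pow X. t \<le> Z_triple P Q n (map_triple (swap_pairs T) L)}"
  proof (intro mult_le_mono2 card_mono subsetI)
    fix T assume "T \<in> {T \<in> Pow X. 2 * t \<le> signed_sum (pair_diff L) X T}"
    then have "T \<subseteq> X" "2 * t \<le> signed_sum (pair_diff L) X T"
      by auto
    then show "T \<in> {T \<in> Pow X. t \<le> Z_triple P Q n (map_triple (swap_pairs T) L)}"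
      using Z_triple_swap_pairs[of T L] assms(1) by auto
  qed (simp add: finite_X)
  finally show ?thesis .
qed

lemma card_triples_common_part_nonneg:
  assumes "\<And>L. \<Phi> (swap_ends L) = \<Phi> L"
  shows "card {L \<in> triples n a b. \<Phi> L} \<le> 2 * card {L \<in> triples n a b. \<Phi> L \<and> 0 \<le> common_part L}"
proof -
  let ?good = "{L \<in> triples n a b. \<Phi> L \<and> 0 \<le> common_part L}"
  have fin: "finite ?good"
    using finite_triples by simp
  have "{L \<in> triples n a b. \<Phi> L} \<subseteq> ?good \<union> swap_ends ` ?good"
  proof
    fix L assume L: "L \<in> {L \<in> triples n a b. \<Phi> L}"
    show "L \<in> ?good \<union> swap_ends ` ?good"
    proof (cases "0 \<le> common_part L")
      case False
      then have "0 \<le> common_part (swap_ends L)"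
        using L common_part_swap_ends_nonneg[of L a b] by simp
      then have "swap_ends L \<in> ?good"
        using L swap_ends_triples[of L n a b] assms[of L] by simp
      then show ?thesis
        using image_eqI[of L swap_ends "swap_ends L" ?good] by simp
    qed (use L in auto)
  qed
  then have "card {L \<in> triples n a b. \<Phi> L} \<le> card (?good \<union> swap_ends ` ?good)"
    using fin by (intro card_mono) auto
  also have "\<dots> \<le> card ?good + card (swap_ends ` ?good)"
    by (rule card_Un_le)
  also have "\<dots> \<le> 2 * card ?good"
    using card_image_le[OF fin, of swap_ends] by simp
  finally show ?thesis .
qed

lemma card_num_separated_large:
  fixes \<eta> :: real
  assumes "b \<le> a" "0 < a" "0 < \<eta>" "\<eta> \<le> 1"
    and X_large: "\<eta> * real n \<le> real (card X)" and a_le: "real a \<le> (1 - \<eta>) * real n"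
  shows "\<eta>^3 / 16 * card (triples n a b)
           \<le> card {L \<in> triples n a b. \<eta>^3 / 4 * real a \<le> real (num_separated L)}"
proof -
  let ?N = "real (card (triples n a b))"
  have "0 < n"
    using assms(2,3) a_le by (cases "n = 0") auto
  have "real n^2 * (\<eta>^3 / 2 * real a * ?N) = (\<eta> * real n) * ?N * (\<eta>^2 / 2 * real a * real n)"
    by (simp add: power2_eq_square power3_eq_cube)
  also have "\<dots> \<le> real (card X) * ?N * real (2 * b * b + (a + b) * (n - (a + b)))"
    using X_large separated_pairs_lower_bound[OF assms(3,4,1) a_le] assms(3)
    by (intro mult_mono) auto
  also have "\<dots> = real (card X * (card (triples n a b) * (2 * b * b + (a + b) * (n - (a + b)))))"
    by simp
  also have "\<dots> \<le> real (n^2 * (\<Sum>L\<in>triples n a b. num_separated L))"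
    using sum_num_separated_ge[OF assms(1)] by (simp only: of_nat_le_iff)
  also have "\<dots> = real n^2 * (\<Sum>L\<in>triples n a b. real (num_separated L))"
    by simp
  finally have "\<eta>^3 / 2 * real a * ?N \<le> (\<Sum>L\<in>triples n a b. real (num_separated L))"
    using \<open>0 < n\<close> by simp
  also have "\<dots> \<le> 4 * real a * card {L \<in> triples n a b. \<eta>^3 / 4 * real a \<le> real (num_separated L)}
                  + \<eta>^3 / 4 * real a * ?N"
  proof (intro sum_le_card_ge finite_triples)
    fix L assume "L \<in> triples n a b"
    then have "num_separated L \<le> 4 * a"
      using num_separated_le[OF _ assms(1)] assms(1) by fastforce
    then show "real (num_separated L) \<le> 4 * real a"
      by simp
  qed (use assms(3) in simp)
  finally show ?thesis
    using assms(2) by (simp add: field_simps)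
qed

lemma card_Z_triple_large:
  fixes \<eta> :: real
  assumes "b \<le> a" "0 < a" "0 < \<eta>" "\<eta> \<le> 1"
    and "\<eta> * real n \<le> real (card X)" "real a \<le> (1 - \<eta>) * real n"
  shows "\<eta>^3 / 384 * card (triples n a b)
           \<le> card {L \<in> triples n a b. \<eta>^3 / 384 * sqrt (real a) \<le> Z_triple P Q n L}"
proof -
  define t where "t = \<eta>^3 / 384 * sqrt (real a)"
  let ?count = "\<lambda>L. card {T \<in> Pow X. t \<le> Z_triple P Q n (map_triple (swap_pairs T) L)}"
  let ?E = "{L \<in> triples n a b. \<eta>^3 / 4 * real a \<le> real (num_separated L) \<and> 0 \<le> common_part L}"
  have "\<eta>^3 / 32 * card (triples n a b) \<le> card ?E"
    using card_num_separated_large[OF assms]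
      card_triples_common_part_nonneg[of "\<lambda>L. \<eta>^3 / 4 * real a \<le> real (num_separated L)" a b]
    by (simp add: num_separated_swap_ends)
  have "16 * t^2 = \<eta>^6 / 9216 * real a"
    unfolding t_def by (simp add: power_mult_distrib power_divide flip: power_mult)
  also have "\<dots> \<le> \<eta>^3 / 4 * real a"
    using power_decreasing[of 3 6 \<eta>] assms(3,4) zero_le_power[of \<eta> 3]
    by (intro mult_right_mono) (linarith, simp)
  finally have "16 * t^2 \<le> \<eta>^3 / 4 * real a" .
  then have per: "2 ^ card X \<le> 12 * ?count L" if "L \<in> ?E" for L
    using that card_swap_pairs_Z_triple_ge[of L t] assms(2,3) unfolding t_def by auto
  have "card ?E * 2 ^ card X = (\<Sum>L\<in>?E. 2 ^ card X)"
    by simp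
  also have "\<dots> \<le> (\<Sum>L\<in>?E. 12 * ?count L)"
    by (rule sum_mono) (rule per)
  also have "\<dots> = 12 * (\<Sum>L\<in>?E. ?count L)"
    by (simp add: sum_distrib_left)
  also have "\<dots> \<le> 12 * (\<Sum>L\<in>triples n a b. ?count L)"
    using finite_triples by (intro mult_le_mono2 sum_mono2) auto
  also have "\<dots> = 12 * (2 ^ card X * card {L \<in> triples n a b. t \<le> Z_triple P Q n L})"
    by (simp add: card_triples_average_swap_pairs)
  finally have "card ?E \<le> 12 * card {L \<in> triples n a b. t \<le> Z_triple P Q n L}"
    by simp
  then show ?thesis
    using \<open>\<eta>^3 / 32 * card (triples n a b) \<le> card ?E\<close> unfolding t_def by linarith
qed

end

lemma pairing_exists:
  assumes P: "P \<subseteq> {1..n}" and Q: "Q \<subseteq> {1..n}" and "P \<inter> Q = {}" "card Q \<le> card P"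
  obtains X \<beta> where "pairing n P Q X \<beta>" "card X = min (card P) (n - card P)"
proof -
  define m where "m = min (card P) (n - card P)"
  have fin: "finite P" "finite Q"
    using P Q by (auto intro: finite_subset)
  have Q_compl: "Q \<subseteq> {1..n} - P"
    using assms by auto
  have card_compl: "card ({1..n} - P) = n - card P"
    using P fin(1) by (simp add: card_Diff_subset)
  obtain X where X: "X \<subseteq> P" "card X = m"
    using obtain_subset_with_card_n[of m P] unfolding m_def by auto
  have "card Q \<le> n - card P"
    using card_mono[OF _ Q_compl] card_compl by simp
  then have "card Q \<le> m"
    using assms(4) unfolding m_def by simp
  have "card ({1..n} - P - Q) = n - card P - card Q"
    using Q_compl fin(2) card_compl by (simp add: card_Diff_subset)
  then have "m - card Q \<le> card ({1..n} - P - Q)"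
    unfolding m_def by simp
  then obtain R where R: "R \<subseteq> {1..n} - P - Q" "card R = m - card Q"
    by (meson obtain_subset_with_card_n)
  have "finite R"
    using R(1) by (rule finite_subset) simp
  then have "card (Q \<union> R) = m"
    using fin(2) R \<open>card Q \<le> m\<close> by (subst card_Un_disjoint) auto
  then obtain \<beta> where \<beta>: "bij_betw \<beta> X (Q \<union> R)"
    using finite_same_card_bij[of X "Q \<union> R"] X fin \<open>finite R\<close> finite_subset[OF X(1)] by auto
  have "pairing n P Q X \<beta>"
  proof
    show "\<beta> ` X \<subseteq> {1..n} - P" "Q \<subseteq> \<beta> ` X"
      using \<beta> R(1) Q_compl unfolding bij_betw_def by auto
    show "inj_on \<beta> X"
      using \<beta> unfolding bij_betw_def by simp
  qed (use assms X(1) in auto)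
  then show thesis
    using X(2) that unfolding m_def by blast
qed

lemma disj_pairs_zero: "disj_pairs n 0 0 = {({}, {})}"
proof -
  have "A = {}" if "A \<subseteq> {1..n}" "card A = 0" for A :: "nat set"
    using that finite_subset[OF that(1)] by auto
  then show ?thesis
    unfolding disj_pairs_def by auto
qed

lemma card_Zstat_large:
  fixes \<eta> :: real
  assumes P: "P \<subseteq> {1..n}" and "Q \<subseteq> {1..n}" "P \<inter> Q = {}" "card Q \<le> card P"
    and P_large: "\<eta> * real n \<le> real (card P)" and P_small: "real (card P) \<le> (1 - \<eta>) * real n"
    and "b \<le> a" "0 < a" "real a \<le> (1 - \<eta>) * real n" "0 < \<eta>" "\<eta> \<le> 1"
  shows "\<eta>^3 / 384 * card (disj_pairs n a b)
           \<le> card {(A, B) \<in> disj_pairs n a b. \<eta>^3 / 384 * sqrt (real a) \<le> real_of_int (Zstat P Q A B)}"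
proof -
  obtain X \<beta> where "pairing n P Q X \<beta>" and card_X: "card X = min (card P) (n - card P)"
    using pairing_exists[OF assms(1-4)] .
  have "card P \<le> n"
    using card_mono[OF _ P] by simp
  then have "\<eta> * real n \<le> real (card X)"
    using P_large P_small unfolding card_X by (simp add: of_nat_diff algebra_simps)
  then have "\<eta>^3 / 384 * card (triples n a b)
      \<le> card {L \<in> triples n a b. \<eta>^3 / 384 * sqrt (real a) \<le> Z_triple P Q n L}"
    using pairing.card_Z_triple_large[OF \<open>pairing n P Q X \<beta>\<close>] assms(7-11) by simp
  moreover have "0 < a choose b"
    using assms(7) by simp
  ultimately show ?thesis
    unfolding card_Z_triple_ge_eq[OF assms(3,7)] card_triples[OF assms(7)] by simp
qed

lemma Zstat_large_with_probability:
  fixes \<eta> :: real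
  assumes "0 < \<eta>" and "P \<subseteq> {1..n}" "Q \<subseteq> {1..n}" "P \<inter> Q = {}"
    and "real (card Q) / real n \<le> real (card P) / real n"
    and "\<eta> \<le> real (card P) / real n" "real (card P) / real n \<le> 1 - \<eta>"
    and "b \<le> a" "real a \<le> (1 - \<eta>) * real n"
  shows "\<eta>^3 / 384 * card (disj_pairs n a b)
           \<le> card {(A, B) \<in> disj_pairs n a b. \<eta>^3 / 384 * sqrt (real a) \<le> real_of_int (Zstat P Q A B)}"
proof -
  have "0 < n"
    using assms(1,6) by (cases "n = 0") auto
  then have "card Q \<le> card P" and P_large: "\<eta> * real n \<le> real (card P)"
    and P_small: "real (card P) \<le> (1 - \<eta>) * real n"
    using assms(5-7) by (simp_all add: divide_le_cancel le_divide_eq divide_le_eq)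
  then have "\<eta> * real n \<le> (1 - \<eta>) * real n"
    by linarith
  then have "\<eta> \<le> 1"
    using \<open>0 < n\<close> by (simp add: mult_le_cancel_right)
  show ?thesis
  proof (cases "a = 0")
    case True
    then have "{(A, B) \<in> disj_pairs n a b. \<eta>^3 / 384 * sqrt (real a) \<le> real_of_int (Zstat P Q A B)}
        = disj_pairs n a b"
      using assms(8) by (auto simp: disj_pairs_zero Zstat_def)
    moreover have "\<eta>^3 / 384 \<le> 1"
      using \<open>\<eta> \<le> 1\<close> assms(1) power_le_one[of \<eta> 3] by simp
    ultimately show ?thesis
      using mult_right_mono[of "\<eta>^3 / 384" 1 "real (card (disj_pairs n a b))"] by simp
  next
    case False
    then show ?thesis
      using card_Zstat_large[OF assms(2-4) \<open>card Q \<le> card P\<close> P_large P_small assms(8) _ assms(9,1)]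
        \<open>\<eta> \<le> 1\<close> by simp
  qed
qed

theorem lemma2p12:
  shows "\<forall>\<eta>::real. \<eta> > 0 \<longrightarrow>
    (\<exists>\<rho>::real. \<rho> > 0 \<and> (\<exists>n0::nat. \<forall>n\<ge>n0. \<forall>P Q :: nat set. \<forall>a b :: nat.
      P \<subseteq> {1..n} \<and> Q \<subseteq> {1..n} \<and> P \<inter> Q = {} \<and>
      real (card P) / real n \<ge> real (card Q) / real n \<and>
      \<eta> \<le> real (card P) / real n \<and> real (card P) / real n \<le> 1 - \<eta> \<and>
      b \<le> a \<and> real a \<le> (1 - \<eta>) * real n
      \<longrightarrow>
      real (card {(A, B) \<in> disj_pairs n a b. real_of_int (Zstat P Q A B) \<ge> \<rho> * sqrt (real a)})
        \<ge> \<rho> * real (card (disj_pairs n a b))))"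
  apply (intro allI impI)
  subgoal for \<eta>
    by (intro exI[of _ "\<eta>^3 / 384"] conjI exI[of _ "0::nat"] allI impI)
       (simp, blast intro: Zstat_large_with_probability)
  done

end
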